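(* Let $M$ be a commutative von Neumann algebra with a faithful normal finite trace $\tau$, let $\Lambda$ be a quadratic family of Young functions, and let $\delta$ be an additive derivation on $L^{\Lambda}(M,\tau)$. Then $z_\delta M$ is a finite-dimensional algebra.
   Context: For a von Neumann algebra $N$ with faithful normal trace $\tau$, $S(N,\tau)$ is the *-algebra of $\tau$-measurable operators affiliated with $N$. A Young function is $\phi(t)=\int_0^t\varphi(s)ds$ with $\varphi\ge0$ right continuous, nondecreasing, $\varphi(0)=0$, $\varphi(s)>0$ for $s>0$, $\varphi(s)\to\infty$. $L_\phi(N,\tau)=\bigcup_n n\{x\in S(N,\tau):\tau(\phi(|x|))\le1\}$. $\phi_1\prec\phi_2$ means $\phi_1(t)\le\phi_2(ct)$ for $t\ge T$, some $c,T\ge0$. A family $\Lambda$ is quadratic if any two members are $\prec$ some member and for each $\phi\in\Lambda$ there are $\psi\in\Lambda$, $c>0,T\ge0$ with $\phi(t^2)\le\psi(ct)$ for $t\ge T$. $L^\Lambda(N,\tau)=\bigcap_{\phi\in\Lambda}L_\phi(N,\tau)$. An additive derivation is an additive map $\delta$ with $\delta(xy)=\delta(x)y+x\delta(y)$. The support of $\delta$ is $z_\delta=\inf\{z\in P(M): z\delta=\delta\}$, where $P(M)$ is the projection lattice of $M$ and $(z\delta)(x)=z\delta(x)$. *)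

theory Defs
  imports "HOL-Analysis.Analysis"
begin

text \<open>Model: a commutative von Neumann algebra M with a faithful normal finite trace
  is (up to trace-preserving *-isomorphism) L-infinity of a finite measure space,
  with trace = integral. Elements are represented by complex-valued measurable
  functions, identified when equal almost everywhere.\<close>

definition young_function :: "(real \<Rightarrow> real) \<Rightarrow> bool" where
  "young_function \<phi> \<longleftrightarrow>
     (\<exists>\<psi> :: real \<Rightarrow> real.
        (\<forall>s\<ge>0. \<psi> s \<ge> 0) \<and>
        (\<forall>s\<ge>0. continuous (at_right s) \<psi>) \<and>
        mono_on {0..} \<psi> \<and>
        \<psi> 0 = 0 \<and>
        (\<forall>s>0. \<psi> s > 0) \<and>
        filterlim \<psi> at_top at_top \<and>
        (\<forall>t\<ge>0. \<phi> t = integral {0..t} \<psi>))"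

definition young_prec :: "(real \<Rightarrow> real) \<Rightarrow> (real \<Rightarrow> real) \<Rightarrow> bool" where
  "young_prec \<phi>1 \<phi>2 \<longleftrightarrow> (\<exists>c\<ge>0. \<exists>T\<ge>0. \<forall>t\<ge>T. \<phi>1 t \<le> \<phi>2 (c * t))"

definition quadratic_family :: "(real \<Rightarrow> real) set \<Rightarrow> bool" where
  "quadratic_family \<Lambda> \<longleftrightarrow>
     (\<forall>\<phi>\<in>\<Lambda>. young_function \<phi>) \<and>
     (\<forall>\<phi>1\<in>\<Lambda>. \<forall>\<phi>2\<in>\<Lambda>. \<exists>\<phi>\<in>\<Lambda>. young_prec \<phi>1 \<phi> \<and> young_prec \<phi>2 \<phi>) \<and>
     (\<forall>\<phi>\<in>\<Lambda>. \<exists>\<psi>\<in>\<Lambda>. \<exists>c>0. \<exists>T\<ge>0. \<forall>t\<ge>T. \<phi> (t\<^sup>2) \<le> \<psi> (c * t))"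

text \<open>S(M,tau): all measurable complex functions (the trace is finite, so every
  affiliated operator is tau-measurable).\<close>
definition meas_ops :: "'a measure \<Rightarrow> ('a \<Rightarrow> complex) set" where
  "meas_ops \<mu> = borel_measurable \<mu>"

definition orlicz :: "'a measure \<Rightarrow> (real \<Rightarrow> real) \<Rightarrow> ('a \<Rightarrow> complex) set" where
  "orlicz \<mu> \<phi> = {x \<in> meas_ops \<mu>. \<exists>n::nat. \<exists>y \<in> meas_ops \<mu>.
       (\<integral>\<^sup>+ \<omega>. ennreal (\<phi> (cmod (y \<omega>))) \<partial>\<mu>) \<le> 1 \<and>
       (AE \<omega> in \<mu>. x \<omega> = of_nat n * y \<omega>)}"

definition orlicz_inter :: "'a measure \<Rightarrow> (real \<Rightarrow> real) set \<Rightarrow> ('a \<Rightarrow> complex) set" where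
  "orlicz_inter \<mu> \<Lambda> = {x \<in> meas_ops \<mu>. \<forall>\<phi>\<in>\<Lambda>. x \<in> orlicz \<mu> \<phi>}"

text \<open>Additive derivation on the algebra of classes of A (a set of representatives),
  described on representatives, respecting a.e. equality.\<close>
definition additive_derivation ::
  "'a measure \<Rightarrow> ('a \<Rightarrow> complex) set \<Rightarrow> (('a \<Rightarrow> complex) \<Rightarrow> ('a \<Rightarrow> complex)) \<Rightarrow> bool" where
  "additive_derivation \<mu> A \<delta> \<longleftrightarrow>
     (\<forall>x\<in>A. \<delta> x \<in> A) \<and>
     (\<forall>x\<in>A. \<forall>y\<in>A. (AE \<omega> in \<mu>. x \<omega> = y \<omega>) \<longrightarrow> (AE \<omega> in \<mu>. \<delta> x \<omega> = \<delta> y \<omega>)) \<and>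
     (\<forall>x\<in>A. \<forall>y\<in>A. AE \<omega> in \<mu>. \<delta> (\<lambda>t. x t + y t) \<omega> = \<delta> x \<omega> + \<delta> y \<omega>) \<and>
     (\<forall>x\<in>A. \<forall>y\<in>A. AE \<omega> in \<mu>. \<delta> (\<lambda>t. x t * y t) \<omega> = \<delta> x \<omega> * y \<omega> + x \<omega> * \<delta> y \<omega>)"

text \<open>Projections of M = indicators of measurable sets. z delta = delta.\<close>
definition proj_fixes :: "'a measure \<Rightarrow> ('a \<Rightarrow> complex) set \<Rightarrow> (('a \<Rightarrow> complex) \<Rightarrow> ('a \<Rightarrow> complex)) \<Rightarrow> 'a set \<Rightarrow> bool" where
  "proj_fixes \<mu> A \<delta> Z \<longleftrightarrow> Z \<in> sets \<mu> \<and>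
     (\<forall>x\<in>A. AE \<omega> in \<mu>. indicator Z \<omega> * \<delta> x \<omega> = \<delta> x \<omega>)"

text \<open>Z is (a representative of) the support z_delta: the infimum of all projections
  z with z delta = delta (in the projection lattice, order = inclusion a.e.).\<close>
definition support_proj :: "'a measure \<Rightarrow> ('a \<Rightarrow> complex) set \<Rightarrow> (('a \<Rightarrow> complex) \<Rightarrow> ('a \<Rightarrow> complex)) \<Rightarrow> 'a set \<Rightarrow> bool" where
  "support_proj \<mu> A \<delta> Z \<longleftrightarrow> Z \<in> sets \<mu> \<and>
     (\<forall>W. proj_fixes \<mu> A \<delta> W \<longrightarrow> (AE \<omega> in \<mu>. \<omega> \<in> Z \<longrightarrow> \<omega> \<in> W)) \<and>
     (\<forall>Z'. Z' \<in> sets \<mu> \<and> (\<forall>W. proj_fixes \<mu> A \<delta> W \<longrightarrow> (AE \<omega> in \<mu>. \<omega> \<in> Z' \<longrightarrow> \<omega> \<in> W))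
            \<longrightarrow> (AE \<omega> in \<mu>. \<omega> \<in> Z' \<longrightarrow> \<omega> \<in> Z))"

definition Linf :: "'a measure \<Rightarrow> ('a \<Rightarrow> complex) set" where
  "Linf \<mu> = {f \<in> borel_measurable \<mu>. \<exists>C. AE \<omega> in \<mu>. cmod (f \<omega>) \<le> C}"

definition fin_dim_corner :: "'a measure \<Rightarrow> 'a set \<Rightarrow> bool" where
  "fin_dim_corner \<mu> Z \<longleftrightarrow>
     (\<exists>G. finite G \<and> G \<subseteq> Linf \<mu> \<and>
        (\<forall>f\<in>Linf \<mu>. \<exists>c :: ('a \<Rightarrow> complex) \<Rightarrow> complex.
            AE \<omega> in \<mu>. indicator Z \<omega> * f \<omega> = (\<Sum>g\<in>G. c g * g \<omega>)))"

end

theory Submission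
  imports Defs
begin

text \<open>
  In a finite measure space an additive derivation \<open>\<delta>\<close> kills every indicator \<open>\<chi>\<^sub>R\<close>
  (differentiate \<open>\<chi>\<^sub>R\<^sup>2 = \<chi>\<^sub>R\<close>), hence every simple function with values in the Gaussian
  integers. If \<open>w\<close> is bounded and \<open>\<delta> w \<noteq> 0\<close>, subtract from \<open>k w\<close> its Gaussian-integer part:
  the remainder \<open>u\<close> is bounded by 2, yet \<open>\<delta> u = k \<delta> w\<close> has \<open>L\<^sup>1\<close>-norm at least 1 for large \<open>k\<close>.
  Were there infinitely many disjoint non-null pieces inside the support \<open>z\<^sub>\<delta>\<close>, gluing such
  functions would give a bounded \<open>y\<close> with \<open>\<parallel>\<delta> y\<parallel>\<^sub>1 = \<infinity>\<close>, impossible since \<open>\<delta> y\<close> lies in the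
  Orlicz space, which is contained in \<open>L\<^sup>1\<close>. Hence \<open>z\<^sub>\<delta>\<close> is a finite union of atoms, on which
  every bounded function is a.e. a linear combination of their indicators.
\<close>

section \<open>Young functions and Orlicz spaces\<close>

lemma young_functionE:
  assumes "young_function \<phi>"
  obtains \<psi> where "\<And>s. 0 \<le> s \<Longrightarrow> 0 \<le> \<psi> s" "mono_on {0..} \<psi>" "0 < \<psi> 1"
    "\<And>t. 0 \<le> t \<Longrightarrow> \<phi> t = integral {0..t} \<psi>"
  using assms unfolding young_function_def by force

lemma integral_mono_on_increment_bounds:
  fixes \<psi> :: "real \<Rightarrow> real"
  assumes mono: "mono_on {0..} \<psi>" and "0 \<le> s" "s \<le> t"
  shows "\<psi> s * (t - s) \<le> integral {0..t} \<psi> - integral {0..s} \<psi>"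
    and "integral {0..t} \<psi> - integral {0..s} \<psi> \<le> \<psi> t * (t - s)"
proof -
  have int: "\<psi> integrable_on {a..b}" if "0 \<le> a" for a b
    using that by (intro integrable_on_mono_on mono_on_subset[OF mono]) auto
  have split: "integral {0..t} \<psi> = integral {0..s} \<psi> + integral {s..t} \<psi>"
    using Henstock_Kurzweil_Integration.integral_combine[where a=0 and c=s and b=t and f=\<psi>]
      int[of 0 t] assms by simp
  have "integral {s..t} (\<lambda>_. \<psi> s) \<le> integral {s..t} \<psi>"
    by (rule integral_le[OF integrable_const_ivl int[OF assms(2)]])
       (use assms mono in \<open>auto simp: mono_on_def\<close>)
  then have lower: "\<psi> s * (t - s) \<le> integral {s..t} \<psi>"
    using assms(3) by (simp add: mult.commute)
  have "integral {s..t} \<psi> \<le> integral {s..t} (\<lambda>_. \<psi> t)"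
    by (rule integral_le[OF int[OF assms(2)] integrable_const_ivl])
       (use assms mono in \<open>auto simp: mono_on_def\<close>)
  then have upper: "integral {s..t} \<psi> \<le> \<psi> t * (t - s)"
    using assms(3) by (simp add: mult.commute)
  show "\<psi> s * (t - s) \<le> integral {0..t} \<psi> - integral {0..s} \<psi>"
    using split lower by linarith
  show "integral {0..t} \<psi> - integral {0..s} \<psi> \<le> \<psi> t * (t - s)"
    using split upper by linarith
qed

lemma young_function_mono:
  assumes "young_function \<phi>"
  shows "\<phi> 0 = 0" and "mono_on {0..} \<phi>"
proof -
  obtain \<psi> where nonneg: "\<And>s. 0 \<le> s \<Longrightarrow> 0 \<le> \<psi> s" and mono: "mono_on {0..} \<psi>"
    and "0 < \<psi> 1" and \<phi>: "\<And>t. 0 \<le> t \<Longrightarrow> \<phi> t = integral {0..t} \<psi>"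
    using young_functionE[OF assms] by metis
  show "\<phi> 0 = 0" using \<phi>[of 0] by simp
  show "mono_on {0..} \<phi>"
  proof (rule mono_onI)
    fix s t :: real assume "s \<in> {0..}" "t \<in> {0..}" "s \<le> t"
    then have "0 \<le> \<psi> s * (t - s)" "\<psi> s * (t - s) \<le> \<phi> t - \<phi> s"
      using nonneg integral_mono_on_increment_bounds(1)[OF mono, of s t] \<phi> by auto
    then show "\<phi> s \<le> \<phi> t" by linarith
  qed
qed

lemma young_function_nonneg:
  assumes "young_function \<phi>" and "0 \<le> t"
  shows "0 \<le> \<phi> t"
  using mono_onD[OF young_function_mono(2)[OF assms(1)], of 0 t] young_function_mono(1)[OF assms(1)]
    assms(2) by simp

lemma young_function_linear_bounds:
  assumes "young_function \<phi>"
  obtains K where "0 < K" "\<And>t. 0 \<le> t \<Longrightarrow> t \<le> 1 \<Longrightarrow> \<phi> t \<le> K * t"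
    "\<And>t. 1 \<le> t \<Longrightarrow> K * (t - 1) \<le> \<phi> t"
proof -
  obtain \<psi> where "\<And>s. 0 \<le> s \<Longrightarrow> 0 \<le> \<psi> s" and mono: "mono_on {0..} \<psi>"
    and pos: "0 < \<psi> 1" and \<phi>: "\<And>t. 0 \<le> t \<Longrightarrow> \<phi> t = integral {0..t} \<psi>"
    using young_functionE[OF assms] by metis
  show thesis
  proof (rule that[OF pos])
    fix t :: real assume "0 \<le> t" "t \<le> 1"
    have "\<phi> t - \<phi> 0 \<le> \<psi> t * t"
      using integral_mono_on_increment_bounds(2)[OF mono order_refl \<open>0 \<le> t\<close>] \<phi>[of 0] \<phi>[OF \<open>0 \<le> t\<close>]
      by simp
    also have "\<dots> \<le> \<psi> 1 * t"
      using \<open>0 \<le> t\<close> \<open>t \<le> 1\<close> mono by (intro mult_right_mono) (auto simp: mono_on_def)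
    finally show "\<phi> t \<le> \<psi> 1 * t"
      using young_function_mono(1)[OF assms] by simp
  next
    fix t :: real assume "1 \<le> t"
    have "\<phi> t - \<phi> 1 = integral {0..t} \<psi> - integral {0..1} \<psi>"
      using \<phi>[of 1] \<phi>[of t] \<open>1 \<le> t\<close> by simp
    then have "\<psi> 1 * (t - 1) \<le> \<phi> t - \<phi> 1"
      using integral_mono_on_increment_bounds(1)[OF mono zero_le_one \<open>1 \<le> t\<close>] by simp
    moreover have "0 \<le> \<phi> 1" by (rule young_function_nonneg[OF assms]) simp
    ultimately show "\<psi> 1 * (t - 1) \<le> \<phi> t" by linarith
  qed
qed

lemma young_function_borel_measurable:
  assumes "young_function \<phi>" and "f \<in> borel_measurable M"
  shows "(\<lambda>\<omega>. \<phi> (cmod (f \<omega>))) \<in> borel_measurable M"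
proof -
  have "mono (\<lambda>t. \<phi> (max 0 t))"
    using young_function_mono(2)[OF assms(1)] by (intro monoI) (auto simp: mono_on_def)
  then have "(\<lambda>t. \<phi> (max 0 t)) \<in> borel_measurable borel" by (rule borel_measurable_mono)
  moreover have "(\<lambda>\<omega>. cmod (f \<omega>)) \<in> borel_measurable M" using assms(2) by measurable
  ultimately have "(\<lambda>\<omega>. \<phi> (max 0 (cmod (f \<omega>)))) \<in> borel_measurable M"
    by (rule measurable_compose[rotated])
  then show ?thesis by (simp only: max_absorb2[OF norm_ge_zero])
qed

definition bounded_measurable :: "'a measure \<Rightarrow> ('a \<Rightarrow> complex) \<Rightarrow> bool" where
  "bounded_measurable M f \<longleftrightarrow> f \<in> borel_measurable M \<and> (\<exists>C. \<forall>\<omega>. cmod (f \<omega>) \<le> C)"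

lemma bounded_measurableI:
  "f \<in> borel_measurable M \<Longrightarrow> (\<And>\<omega>. cmod (f \<omega>) \<le> C) \<Longrightarrow> bounded_measurable M f"
  unfolding bounded_measurable_def by blast

lemma bounded_measurableE:
  assumes "bounded_measurable M f"
  obtains C where "f \<in> borel_measurable M" "0 \<le> C" "\<And>\<omega>. cmod (f \<omega>) \<le> C"
  using assms unfolding bounded_measurable_def by (meson norm_ge_zero order_trans)

lemma bounded_measurable_const: "bounded_measurable M (\<lambda>_. c)"
  by (rule bounded_measurableI[of _ _ "cmod c"]) auto

lemma bounded_measurable_indicator:
  "R \<in> sets M \<Longrightarrow> bounded_measurable M (\<lambda>t. c * indicator R t)"
  by (rule bounded_measurableI[of _ _ "cmod c"]) (auto simp: indicator_def)

lemma bounded_measurable_add: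
  assumes "bounded_measurable M f" "bounded_measurable M g"
  shows "bounded_measurable M (\<lambda>t. f t + g t)"
proof -
  obtain C D where "f \<in> borel_measurable M" "\<And>\<omega>. cmod (f \<omega>) \<le> C"
    "g \<in> borel_measurable M" "\<And>\<omega>. cmod (g \<omega>) \<le> D"
    using assms by (meson bounded_measurableE)
  then show ?thesis
    by (intro bounded_measurableI[of _ _ "C + D"]) (auto intro: norm_triangle_le add_mono)
qed

lemma bounded_measurable_mult:
  assumes "bounded_measurable M f" "bounded_measurable M g"
  shows "bounded_measurable M (\<lambda>t. f t * g t)"
proof -
  obtain C D where "f \<in> borel_measurable M" "\<And>\<omega>. cmod (f \<omega>) \<le> C"
    "g \<in> borel_measurable M" "\<And>\<omega>. cmod (g \<omega>) \<le> D"
    using assms by (meson bounded_measurableE)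
  then show ?thesis
    by (intro bounded_measurableI[of _ _ "C * D"])
       (auto simp: norm_mult intro: mult_mono order_trans[OF norm_ge_zero])
qed

lemma bounded_measurable_sum:
  "finite I \<Longrightarrow> (\<And>i. i \<in> I \<Longrightarrow> bounded_measurable M (f i))
    \<Longrightarrow> bounded_measurable M (\<lambda>t. \<Sum>i\<in>I. f i t)"
  by (induction I rule: finite_induct)
     (auto intro: bounded_measurable_add simp: bounded_measurable_const)

lemma bounded_in_orlicz:
  assumes "finite_measure \<mu>" and "young_function \<phi>" and "bounded_measurable \<mu> f"
  shows "f \<in> orlicz \<mu> \<phi>"
proof -
  obtain C where f: "f \<in> borel_measurable \<mu>" and "0 \<le> C" and fC: "\<And>\<omega>. cmod (f \<omega>) \<le> C"
    using bounded_measurableE[OF assms(3)] by metis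
  obtain K where "0 < K" and K: "\<And>t. 0 \<le> t \<Longrightarrow> t \<le> 1 \<Longrightarrow> \<phi> t \<le> K * t"
    using young_function_linear_bounds[OF assms(2)] by blast
  define m where "m = measure \<mu> (space \<mu>)"
  obtain n :: nat where n: "1 + C + K * C * m \<le> real n" using real_arch_simple by blast
  have "0 \<le> K * C * m" using \<open>0 < K\<close> \<open>0 \<le> C\<close> by (simp add: m_def)
  then have n_pos: "0 < real n" and "C \<le> real n" and "K * C * m \<le> real n"
    using n \<open>0 \<le> C\<close> by linarith+
  define y where "y \<omega> = f \<omega> / of_nat n" for \<omega>
  have "y \<in> borel_measurable \<mu>" unfolding y_def using f by measurable
  have y_le: "cmod (y \<omega>) \<le> C / real n" for \<omega>
    using fC[of \<omega>] n_pos by (simp add: y_def norm_divide divide_right_mono)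
  have "\<phi> (cmod (y \<omega>)) \<le> K * (C / real n)" for \<omega>
  proof -
    have "C / real n \<le> 1" using \<open>C \<le> real n\<close> n_pos by simp
    then have "\<phi> (cmod (y \<omega>)) \<le> K * cmod (y \<omega>)" using K y_le[of \<omega>] by force
    also have "\<dots> \<le> K * (C / real n)" using mult_left_mono[OF y_le[of \<omega>]] \<open>0 < K\<close> by simp
    finally show ?thesis .
  qed
  then have "(\<integral>\<^sup>+ \<omega>. ennreal (\<phi> (cmod (y \<omega>))) \<partial>\<mu>) \<le> (\<integral>\<^sup>+ \<omega>. ennreal (K * (C / real n)) \<partial>\<mu>)"
    by (intro nn_integral_mono ennreal_leI)
  also have "\<dots> = ennreal (K * (C / real n)) * ennreal m"
    using finite_measure.emeasure_eq_measure[OF assms(1)] by (simp add: m_def)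
  also have "\<dots> = ennreal (K * (C / real n) * m)"
    using \<open>0 < K\<close> \<open>0 \<le> C\<close> by (intro ennreal_mult[symmetric]) (auto simp: m_def)
  also have "\<dots> \<le> 1"
  proof -
    have "K * (C / real n) * m \<le> 1" using \<open>K * C * m \<le> real n\<close> n_pos by (simp add: field_simps)
    then show ?thesis by simp
  qed
  finally have "(\<integral>\<^sup>+ \<omega>. ennreal (\<phi> (cmod (y \<omega>))) \<partial>\<mu>) \<le> 1" .
  moreover have "\<forall>\<omega>. f \<omega> = of_nat n * y \<omega>" using n_pos by (simp add: y_def)
  ultimately show ?thesis
    using f \<open>y \<in> borel_measurable \<mu>\<close> unfolding orlicz_def meas_ops_def by auto
qed

lemma orlicz_nn_integral_norm_finite:
  assumes "finite_measure \<mu>" and "young_function \<phi>" and "x \<in> orlicz \<mu> \<phi>"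
  shows "(\<integral>\<^sup>+ \<omega>. ennreal (cmod (x \<omega>)) \<partial>\<mu>) < \<infinity>"
proof -
  obtain n :: nat and y where y: "y \<in> borel_measurable \<mu>"
    and y_int: "(\<integral>\<^sup>+ \<omega>. ennreal (\<phi> (cmod (y \<omega>))) \<partial>\<mu>) \<le> 1"
    and x: "AE \<omega> in \<mu>. x \<omega> = of_nat n * y \<omega>"
    using assms(3) unfolding orlicz_def meas_ops_def by blast
  obtain K where "0 < K" and K: "\<And>t. 1 \<le> t \<Longrightarrow> K * (t - 1) \<le> \<phi> t"
    using young_function_linear_bounds[OF assms(2)] by blast
  \<comment> \<open>A Young function grows at least linearly, so \<open>|y| \<le> 1 + \<phi>(|y|)/K\<close>.\<close>
  have "ennreal (cmod (y \<omega>)) \<le> 1 + ennreal (1 / K) * ennreal (\<phi> (cmod (y \<omega>)))" for \<omega>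
  proof -
    have "0 \<le> \<phi> (cmod (y \<omega>))" using young_function_nonneg[OF assms(2)] by simp
    then have "0 \<le> \<phi> (cmod (y \<omega>)) / K" using \<open>0 < K\<close> by simp
    moreover have "cmod (y \<omega>) - 1 \<le> \<phi> (cmod (y \<omega>)) / K" if "1 \<le> cmod (y \<omega>)"
      using K[OF that] \<open>0 < K\<close> by (simp add: pos_le_divide_eq mult.commute)
    ultimately have "cmod (y \<omega>) \<le> 1 + (1 / K) * \<phi> (cmod (y \<omega>))" by force
    then have "ennreal (cmod (y \<omega>)) \<le> ennreal (1 + (1 / K) * \<phi> (cmod (y \<omega>)))"
      by (rule ennreal_leI)
    also have "\<dots> = 1 + ennreal (1 / K) * ennreal (\<phi> (cmod (y \<omega>)))"
      using \<open>0 < K\<close> \<open>0 \<le> \<phi> (cmod (y \<omega>))\<close> by (simp add: ennreal_plus ennreal_mult[symmetric])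
    finally show ?thesis .
  qed
  then have "(\<integral>\<^sup>+ \<omega>. ennreal (cmod (y \<omega>)) \<partial>\<mu>)
      \<le> (\<integral>\<^sup>+ \<omega>. 1 + ennreal (1 / K) * ennreal (\<phi> (cmod (y \<omega>))) \<partial>\<mu>)"
    by (rule nn_integral_mono)
  also have "\<dots> = emeasure \<mu> (space \<mu>) + ennreal (1 / K) * (\<integral>\<^sup>+ \<omega>. ennreal (\<phi> (cmod (y \<omega>))) \<partial>\<mu>)"
    using young_function_borel_measurable[OF assms(2) y] by (simp add: nn_integral_add nn_integral_cmult)
  also have "\<dots> < \<infinity>"
    using y_int finite_measure.emeasure_finite[OF assms(1), of "space \<mu>"]
    by (simp add: ennreal_mult_less_top less_top order.strict_trans1)
  finally have "(\<integral>\<^sup>+ \<omega>. ennreal (cmod (y \<omega>)) \<partial>\<mu>) < \<infinity>" .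
  moreover have "(\<integral>\<^sup>+ \<omega>. ennreal (cmod (x \<omega>)) \<partial>\<mu>) = ennreal (real n) * (\<integral>\<^sup>+ \<omega>. ennreal (cmod (y \<omega>)) \<partial>\<mu>)"
    using x y by (subst nn_integral_cmult[symmetric])
      (auto intro!: nn_integral_cong_AE simp: norm_mult ennreal_mult)
  ultimately show ?thesis by (simp add: ennreal_mult_less_top)
qed

lemma AE_by_norm_truncation:
  fixes x :: "'a \<Rightarrow> 'b::real_normed_vector"
  assumes "\<And>N::nat. AE \<omega> in M. norm (x \<omega>) \<le> real N \<longrightarrow> Q \<omega>"
  shows "AE \<omega> in M. Q \<omega>"
proof -
  have "AE \<omega> in M. \<forall>N::nat. norm (x \<omega>) \<le> real N \<longrightarrow> Q \<omega>"
    using assms by (subst AE_all_countable) simp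
  then show ?thesis by eventually_elim (meson real_arch_simple)
qed

lemma nn_integral_eq_top_if_disjoint_family:
  assumes f: "f \<in> borel_measurable M" and P: "\<And>n. P n \<in> sets M" and "disjoint_family P"
    and large: "\<And>n::nat. 1 \<le> (\<integral>\<^sup>+ \<omega>\<in>P n. f \<omega> \<partial>M)"
  shows "(\<integral>\<^sup>+ \<omega>. f \<omega> \<partial>M) = \<infinity>"
proof -
  have "(\<Sum>n. (\<integral>\<^sup>+ \<omega>\<in>P n. f \<omega> \<partial>M)) = (\<integral>\<^sup>+ \<omega>\<in>(\<Union>n. P n). f \<omega> \<partial>M)"
    using nn_integral_disjoint_family[OF f P \<open>disjoint_family P\<close>] by simp
  also have "\<dots> \<le> (\<integral>\<^sup>+ \<omega>. f \<omega> \<partial>M)"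
    by (intro nn_integral_mono) (simp add: indicator_def)
  finally have le: "(\<Sum>n. (\<integral>\<^sup>+ \<omega>\<in>P n. f \<omega> \<partial>M)) \<le> (\<integral>\<^sup>+ \<omega>. f \<omega> \<partial>M)" .
  have "of_nat N \<le> (\<integral>\<^sup>+ \<omega>. f \<omega> \<partial>M)" for N
  proof -
    have "of_nat N = (\<Sum>n<N. (1::ennreal))" by simp
    also have "\<dots> \<le> (\<Sum>n<N. (\<integral>\<^sup>+ \<omega>\<in>P n. f \<omega> \<partial>M))" by (intro sum_mono large)
    also have "\<dots> \<le> (\<Sum>n. (\<integral>\<^sup>+ \<omega>\<in>P n. f \<omega> \<partial>M))" by (rule sum_le_suminf) auto
    finally show ?thesis using le by simp
  qed
  then show ?thesis using ennreal_Ex_less_of_nat by (metis leD top.not_eq_extremum infinity_ennreal_def)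
qed

section \<open>The support projection\<close>

lemma proj_fixes_space: "proj_fixes M A \<delta> (space M)"
  unfolding proj_fixes_def by (auto intro!: AE_I2)

lemma proj_fixes_INT:
  assumes "\<And>n::nat. proj_fixes M A \<delta> (W n)"
  shows "proj_fixes M A \<delta> (\<Inter>n. W n)"
  unfolding proj_fixes_def
proof (intro conjI ballI)
  show "(\<Inter>n. W n) \<in> sets M" using assms unfolding proj_fixes_def by blast
  fix x assume "x \<in> A"
  then have "\<forall>n. AE \<omega> in M. indicator (W n) \<omega> * \<delta> x \<omega> = \<delta> x \<omega>"
    using assms unfolding proj_fixes_def by blast
  then have "AE \<omega> in M. \<forall>n. indicator (W n) \<omega> * \<delta> x \<omega> = \<delta> x \<omega>"
    by (subst AE_all_countable)
  then show "AE \<omega> in M. indicator (\<Inter>n. W n) \<omega> * \<delta> x \<omega> = \<delta> x \<omega>"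
    by eventually_elim (auto simp: indicator_def split: if_splits)
qed

lemma proj_fixes_Int:
  assumes "proj_fixes M A \<delta> W" and "proj_fixes M A \<delta> V"
  shows "proj_fixes M A \<delta> (W \<inter> V)"
proof -
  have "(\<Inter>n::nat. if n = 0 then W else V) = W \<inter> V" by (auto split: if_splits)
  moreover have "proj_fixes M A \<delta> (\<Inter>n::nat. if n = 0 then W else V)"
    using assms by (intro proj_fixes_INT) auto
  ultimately show ?thesis by simp
qed

lemma (in finite_measure) exists_least_proj_fixes:
  "\<exists>Z. proj_fixes M A \<delta> Z \<and> (\<forall>W. proj_fixes M A \<delta> W \<longrightarrow> (AE \<omega> in M. \<omega> \<in> Z \<longrightarrow> \<omega> \<in> W))"
proof -
  define F where "F = {W. proj_fixes M A \<delta> W}"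
  define m where "m = (INF W\<in>F. measure M W)"
  have "F \<noteq> {}" using proj_fixes_space unfolding F_def by blast
  have bdd: "bdd_below (measure M ` F)" by (rule bdd_belowI[of _ 0]) auto
  have F_sets: "W \<in> F \<Longrightarrow> W \<in> sets M" for W unfolding F_def proj_fixes_def by blast
  \<comment> \<open>A minimizing sequence; its intersection still lies in \<open>F\<close> and attains the infimum.\<close>
  have "\<exists>W\<in>F. measure M W < m + 1 / Suc n" for n :: nat
  proof -
    have "m < m + 1 / Suc n" by simp
    then show ?thesis unfolding m_def using cINF_less_iff[OF \<open>F \<noteq> {}\<close> bdd] by blast
  qed
  then obtain W where W: "\<And>n. W n \<in> F" and W_measure: "\<And>n. measure M (W n) < m + 1 / Suc n"
    by metis
  define Z where "Z = (\<Inter>n. W n)"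
  have "Z \<in> F" using W unfolding Z_def F_def by (intro CollectI proj_fixes_INT) auto
  have "measure M Z \<le> m"
  proof (rule field_le_epsilon)
    fix e :: real assume "0 < e"
    then obtain n :: nat where "1 / Suc n < e" using nat_approx_posE by blast
    moreover have "measure M Z \<le> measure M (W n)"
      using W F_sets unfolding Z_def by (intro finite_measure_mono) auto
    ultimately show "measure M Z \<le> m + e" using W_measure[of n] by linarith
  qed
  show ?thesis
  proof (intro exI conjI allI impI)
    show "proj_fixes M A \<delta> Z" using \<open>Z \<in> F\<close> unfolding F_def by simp
    fix V assume V: "proj_fixes M A \<delta> V"
    then have "Z \<inter> V \<in> F" using \<open>Z \<in> F\<close> unfolding F_def by (simp add: proj_fixes_Int)
    then have "m \<le> measure M (Z \<inter> V)" unfolding m_def by (rule cINF_lower[OF bdd])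
    then have "measure M (Z - V) = 0"
      using finite_measure_Diff'[of Z V] F_sets[OF \<open>Z \<in> F\<close>] F_sets[OF \<open>Z \<inter> V \<in> F\<close>]
        \<open>measure M Z \<le> m\<close> measure_nonneg[of M "Z - V"] V unfolding proj_fixes_def by auto
    moreover have "Z - V \<in> sets M" using F_sets[OF \<open>Z \<in> F\<close>] V unfolding proj_fixes_def by auto
    ultimately have "Z - V \<in> null_sets M" by (simp add: emeasure_eq_measure null_sets_def)
    from AE_not_in[OF this] show "AE \<omega> in M. \<omega> \<in> Z \<longrightarrow> \<omega> \<in> V" by eventually_elim auto
  qed
qed

lemma support_proj_if_least:
  assumes "proj_fixes M A \<delta> Z"
    and "\<And>W. proj_fixes M A \<delta> W \<Longrightarrow> AE \<omega> in M. \<omega> \<in> Z \<longrightarrow> \<omega> \<in> W"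
  shows "support_proj M A \<delta> Z"
  using assms unfolding support_proj_def proj_fixes_def by blast

section \<open>Atoms\<close>

definition atom :: "'a measure \<Rightarrow> 'a set \<Rightarrow> bool" where
  "atom M Q \<longleftrightarrow> Q \<in> sets M \<and> emeasure M Q \<noteq> 0 \<and>
     (\<forall>S\<in>sets M. S \<subseteq> Q \<longrightarrow> emeasure M S = 0 \<or> emeasure M (Q - S) = 0)"

lemma (in finite_measure) atom_AE_le_average:
  fixes g :: "'a \<Rightarrow> real"
  assumes Q: "atom M Q" and g: "g \<in> borel_measurable M" and g_bounded: "AE \<omega> in M. \<bar>g \<omega>\<bar> \<le> C"
  shows "AE \<omega> in M. \<omega> \<in> Q \<longrightarrow> g \<omega> \<le> (\<integral>\<omega>. indicator Q \<omega> * g \<omega> \<partial>M) / measure M Q"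
proof -
  have Q_sets: "Q \<in> sets M" and "emeasure M Q \<noteq> 0"
    and Q_atom: "\<And>S. S \<in> sets M \<Longrightarrow> S \<subseteq> Q \<Longrightarrow> emeasure M S = 0 \<or> emeasure M (Q - S) = 0"
    using Q unfolding atom_def by auto
  then have "0 < measure M Q" by (simp add: emeasure_eq_measure zero_less_measure_iff)
  define c where "c = (\<integral>\<omega>. indicator Q \<omega> * g \<omega> \<partial>M) / measure M Q"
  define h where "h = (\<lambda>\<omega>. indicator Q \<omega> * g \<omega> - indicator Q \<omega> * c)"
  have int_g: "integrable M (\<lambda>\<omega>. indicator Q \<omega> * g \<omega>)"
  proof (rule integrable_const_bound[where B="\<bar>C\<bar>"])
    show "AE \<omega> in M. norm (indicator Q \<omega> * g \<omega>) \<le> \<bar>C\<bar>"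
      using g_bounded by eventually_elim (auto simp: indicator_def)
  qed (use Q_sets g in simp)
  have int_c: "integrable M (\<lambda>\<omega>. indicator Q \<omega> * c)"
    using Q_sets by (intro integrable_const_bound[where B="\<bar>c\<bar>"]) (auto simp: indicator_def)
  have "integral\<^sup>L M h = (\<integral>\<omega>. indicator Q \<omega> * g \<omega> \<partial>M) - (\<integral>\<omega>. indicator Q \<omega> * c \<partial>M)"
    unfolding h_def using int_g int_c by simp
  also have "(\<integral>\<omega>. indicator Q \<omega> * c \<partial>M) = measure M Q * c"
    using Q_sets by (simp add: Int_absorb2 sets.sets_into_space)
  finally have h_int: "integral\<^sup>L M h = 0" using \<open>0 < measure M Q\<close> by (simp add: c_def)
  define S where "S = {\<omega> \<in> space M. \<omega> \<in> Q \<and> c < g \<omega>}"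
  have "S \<in> sets M" unfolding S_def using Q_sets g by measurable
  then consider "S \<in> null_sets M" | "Q - S \<in> null_sets M"
    using Q_atom[of S] Q_sets by (auto simp: S_def)
  then show ?thesis
  proof cases
    case 1
    from AE_not_in[OF this] AE_space show ?thesis
      by eventually_elim (auto simp: S_def c_def[symmetric])
  next
    case 2
    \<comment> \<open>Then \<open>g > c\<close> a.e. on \<open>Q\<close>, so \<open>h \<ge> 0\<close> has integral 0 without vanishing on \<open>Q\<close>.\<close>
    from AE_not_in[OF this] have above: "AE \<omega> in M. \<omega> \<in> Q \<longrightarrow> c < g \<omega>"
      by (rule AE_mp) (auto intro!: AE_I2 simp: S_def)
    then have "AE \<omega> in M. 0 \<le> h \<omega>" by eventually_elim (auto simp: h_def indicator_def)
    with h_int int_g int_c have "AE \<omega> in M. h \<omega> = 0"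
      by (subst integral_nonneg_eq_0_iff_AE[symmetric]) (auto simp: h_def)
    with above have "AE \<omega> in M. \<omega> \<notin> Q" by eventually_elim (auto simp: h_def indicator_def)
    with \<open>emeasure M Q \<noteq> 0\<close> show ?thesis by (auto simp: AE_iff_null_sets[OF Q_sets, symmetric])
  qed
qed

lemma (in finite_measure) atom_AE_const:
  assumes Q: "atom M Q" and f: "f \<in> Linf M"
  shows "\<exists>c. AE \<omega> in M. \<omega> \<in> Q \<longrightarrow> f \<omega> = c"
proof -
  obtain C where f_meas: "f \<in> borel_measurable M" and f_bounded: "AE \<omega> in M. cmod (f \<omega>) \<le> C"
    using f unfolding Linf_def by blast
  have real_const: "\<exists>c. AE \<omega> in M. \<omega> \<in> Q \<longrightarrow> g \<omega> = c"
    if g: "g \<in> borel_measurable M" and g_bounded: "AE \<omega> in M. \<bar>g \<omega>\<bar> \<le> C" for g :: "'a \<Rightarrow> real"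
  proof -
    have "(\<lambda>\<omega>. - g \<omega>) \<in> borel_measurable M" using g by measurable
    moreover have "AE \<omega> in M. \<bar>- g \<omega>\<bar> \<le> C" using g_bounded by simp
    ultimately have neg: "AE \<omega> in M. \<omega> \<in> Q \<longrightarrow>
        - g \<omega> \<le> (\<integral>\<omega>. indicator Q \<omega> * - g \<omega> \<partial>M) / measure M Q"
      by (rule atom_AE_le_average[OF Q])
    have int_neg: "(\<integral>\<omega>. indicator Q \<omega> * - g \<omega> \<partial>M) = - (\<integral>\<omega>. indicator Q \<omega> * g \<omega> \<partial>M)"
      by simp
    from atom_AE_le_average[OF Q g g_bounded] neg[unfolded int_neg]
    have "AE \<omega> in M. \<omega> \<in> Q \<longrightarrow> g \<omega> = (\<integral>\<omega>. indicator Q \<omega> * g \<omega> \<partial>M) / measure M Q"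
      by eventually_elim (auto simp: minus_divide_left[symmetric])
    then show ?thesis by blast
  qed
  have "(\<lambda>\<omega>. Re (f \<omega>)) \<in> borel_measurable M" using f_meas by measurable
  moreover have "AE \<omega> in M. \<bar>Re (f \<omega>)\<bar> \<le> C"
    using f_bounded by eventually_elim (rule order_trans[OF abs_Re_le_cmod])
  ultimately obtain a where a: "AE \<omega> in M. \<omega> \<in> Q \<longrightarrow> Re (f \<omega>) = a" using real_const by blast
  have "(\<lambda>\<omega>. Im (f \<omega>)) \<in> borel_measurable M" using f_meas by measurable
  moreover have "AE \<omega> in M. \<bar>Im (f \<omega>)\<bar> \<le> C"
    using f_bounded by eventually_elim (rule order_trans[OF abs_Im_le_cmod])
  ultimately obtain b where b: "AE \<omega> in M. \<omega> \<in> Q \<longrightarrow> Im (f \<omega>) = b" using real_const by blast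
  from a b have "AE \<omega> in M. \<omega> \<in> Q \<longrightarrow> f \<omega> = Complex a b"
    by eventually_elim (auto simp: complex_eq_iff)
  then show ?thesis by blast
qed

definition no_infinite_disjoint_family :: "'a measure \<Rightarrow> 'a set \<Rightarrow> bool" where
  "no_infinite_disjoint_family M Z \<longleftrightarrow>
     \<not> (\<exists>P :: nat \<Rightarrow> 'a set. disjoint_family P \<and> (\<forall>n. P n \<in> sets M \<and> P n \<subseteq> Z \<and> emeasure M (P n) \<noteq> 0))"

lemma disjoint_family_by_incseq:
  fixes D U :: "nat \<Rightarrow> 'a set"
  assumes "\<And>n. D n \<subseteq> U (Suc n)" and "incseq U" and "\<And>n. D n \<inter> U n = {}"
  shows "disjoint_family D"
  unfolding disjoint_family_on_def
proof (intro ballI impI)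
  have sep: "D m \<inter> D n = {}" if "m < n" for m n
  proof -
    have "U (Suc m) \<subseteq> U n" using \<open>incseq U\<close> that by (simp add: incseq_def)
    then have "D m \<subseteq> U n" using assms(1)[of m] by blast
    then show ?thesis using assms(3)[of n] by blast
  qed
  fix m n :: nat assume "m \<noteq> n"
  then show "D m \<inter> D n = {}" using sep[of m n] sep[of n m] by (cases "m < n") auto
qed

lemma exists_atom_subset:
  assumes Z: "no_infinite_disjoint_family M Z"
    and P: "P \<in> sets M" "P \<subseteq> Z" "emeasure M P \<noteq> 0"
  shows "\<exists>Q. atom M Q \<and> Q \<subseteq> P"
proof (rule ccontr)
  assume no_atom: "\<nexists>Q. atom M Q \<and> Q \<subseteq> P"
  define good where "good R \<longleftrightarrow> R \<in> sets M \<and> R \<subseteq> P \<and> emeasure M R \<noteq> 0" for R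
  define split where
    "split R = (SOME S. S \<in> sets M \<and> S \<subseteq> R \<and> emeasure M S \<noteq> 0 \<and> emeasure M (R - S) \<noteq> 0)" for R
  have split: "split R \<in> sets M \<and> split R \<subseteq> R \<and> emeasure M (split R) \<noteq> 0 \<and> emeasure M (R - split R) \<noteq> 0"
    if "good R" for R
    unfolding split_def
  proof (rule someI_ex)
    have "\<not> atom M R" using no_atom that by (auto simp: good_def)
    then show "\<exists>S. S \<in> sets M \<and> S \<subseteq> R \<and> emeasure M S \<noteq> 0 \<and> emeasure M (R - S) \<noteq> 0"
      using that unfolding atom_def good_def by blast
  qed
  \<comment> \<open>Without atoms, \<open>P\<close> can be split forever; the discarded halves are disjoint and non-null.\<close>
  define R where "R = rec_nat P (\<lambda>_. split)"
  have R_Suc: "R (Suc n) = split (R n)" for n by (simp add: R_def)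
  have good_R: "good (R n)" for n
  proof (induction n)
    case 0
    then show ?case using P by (simp add: good_def R_def)
  next
    case (Suc n)
    then show ?case using split[OF Suc] by (auto simp: good_def R_Suc)
  qed
  have "decseq R" using split good_R by (intro decseq_SucI) (simp add: R_Suc)
  define D where "D n = R n - R (Suc n)" for n
  have "disjoint_family D"
    using \<open>decseq R\<close> by (intro disjoint_family_by_incseq[where U="\<lambda>n. - R n"]) (auto simp: D_def decseq_def incseq_def)
  moreover have "D n \<in> sets M \<and> D n \<subseteq> Z \<and> emeasure M (D n) \<noteq> 0" for n
    using good_R[of n] split[OF good_R[of n]] P(2) by (auto simp: D_def R_Suc good_def)
  ultimately show False using Z unfolding no_infinite_disjoint_family_def by blast
qed

lemma atomic_decomposition:
  assumes Z: "no_infinite_disjoint_family M Z" and "Z \<in> sets M"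
  shows "\<exists>\<A>. finite \<A> \<and> disjoint \<A> \<and> (\<forall>Q\<in>\<A>. atom M Q \<and> Q \<subseteq> Z) \<and> Z - \<Union>\<A> \<in> null_sets M"
proof -
  define pick where "pick S =
      (if Z - S \<in> sets M \<and> emeasure M (Z - S) \<noteq> 0 then SOME Q. atom M Q \<and> Q \<subseteq> Z - S else {})" for S
  have pick_atom: "atom M (pick S) \<and> pick S \<subseteq> Z - S"
    if "Z - S \<in> sets M" "emeasure M (Z - S) \<noteq> 0" for S
    using someI_ex[OF exists_atom_subset[OF Z that(1) Diff_subset that(2)]] that
    by (simp add: pick_def)
  have atom_if_nonempty: "pick S \<noteq> {} \<Longrightarrow> atom M (pick S)" for S
    using pick_atom[of S] unfolding pick_def by (auto split: if_splits)
  have pick_sub: "pick S \<subseteq> Z - S" for S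
    using pick_atom[of S] unfolding pick_def by (auto split: if_splits)
  have pick_sets: "pick S \<in> sets M" for S
    using atom_if_nonempty[of S] by (cases "pick S = {}") (auto simp: atom_def)
  \<comment> \<open>Greedily remove atoms; the process must stop after finitely many steps.\<close>
  define U where "U = rec_nat {} (\<lambda>_ S. S \<union> pick S)"
  have U_0: "U 0 = {}" and U_Suc: "U (Suc n) = U n \<union> pick (U n)" for n by (simp_all add: U_def)
  have U_eq: "U n = (\<Union>m<n. pick (U m))" for n
    by (induction n) (auto simp: U_0 U_Suc lessThan_Suc)
  have U_sets: "U n \<in> sets M" for n
    by (induction n) (auto simp: U_0 U_Suc intro!: sets.Un pick_sets)
  have disj: "disjoint_family (\<lambda>n. pick (U n))"
    using pick_sub by (intro disjoint_family_by_incseq[where U=U]) (auto simp: U_Suc intro!: incseq_SucI)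
  obtain n where n: "emeasure M (Z - U n) = 0"
  proof (rule ccontr)
    assume "\<not> thesis"
    then have "emeasure M (Z - U n) \<noteq> 0" for n using that by blast
    then have "pick (U n) \<in> sets M \<and> pick (U n) \<subseteq> Z \<and> emeasure M (pick (U n)) \<noteq> 0" for n
      using pick_atom[of "U n"] U_sets \<open>Z \<in> sets M\<close> by (auto simp: atom_def)
    with disj Z show False unfolding no_infinite_disjoint_family_def by blast
  qed
  define \<A> where "\<A> = (\<lambda>m. pick (U m)) ` {..<n} - {{}}"
  have "finite \<A>" by (simp add: \<A>_def)
  moreover have "Q \<in> \<A> \<Longrightarrow> atom M Q \<and> Q \<subseteq> Z" for Q
    using atom_if_nonempty pick_sub by (auto simp: \<A>_def)
  moreover have "disjoint \<A>"
    by (rule pairwise_subset[OF disjoint_family_on_disjoint_image[OF disj]]) (auto simp: \<A>_def)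
  moreover have "Z - \<Union>\<A> = Z - U n" using U_eq[of n] by (auto simp: \<A>_def)
  then have "Z - \<Union>\<A> \<in> null_sets M" using n U_sets \<open>Z \<in> sets M\<close> by auto
  ultimately show ?thesis by blast
qed

lemma inj_indicator: "inj (indicator :: 'a set \<Rightarrow> 'a \<Rightarrow> complex)"
proof (rule injI)
  fix A B :: "'a set" assume "(indicator A :: 'a \<Rightarrow> complex) = indicator B"
  then have "x \<in> A \<longleftrightarrow> x \<in> B" for x by (metis indicator_eq_1_iff)
  then show "A = B" by blast
qed

lemma (in finite_measure) fin_dim_corner_if_atomic:
  assumes "finite \<A>" and "disjoint \<A>" and atoms: "\<And>Q. Q \<in> \<A> \<Longrightarrow> atom M Q \<and> Q \<subseteq> Z"
    and null: "Z - \<Union>\<A> \<in> null_sets M"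
  shows "fin_dim_corner M Z"
  unfolding fin_dim_corner_def
proof (intro exI[of _ "indicator ` \<A>"] conjI ballI)
  show "finite (indicator ` \<A> :: ('a \<Rightarrow> complex) set)" using \<open>finite \<A>\<close> by simp
  show "indicator ` \<A> \<subseteq> Linf M"
  proof
    fix g :: "'a \<Rightarrow> complex" assume "g \<in> indicator ` \<A>"
    then obtain Q where "Q \<in> \<A>" and g: "g = indicator Q" by blast
    then have "g \<in> borel_measurable M"
      using atoms unfolding atom_def by (auto intro: borel_measurable_indicator)
    moreover have "AE \<omega> in M. cmod (g \<omega>) \<le> 1" by (rule AE_I2) (simp add: g indicator_def)
    ultimately show "g \<in> Linf M" unfolding Linf_def by blast
  qed
  fix f assume "f \<in> Linf M"
  then have "\<forall>Q\<in>\<A>. \<exists>c. AE \<omega> in M. \<omega> \<in> Q \<longrightarrow> f \<omega> = c"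
    using atoms atom_AE_const by blast
  then obtain c where c: "\<And>Q. Q \<in> \<A> \<Longrightarrow> AE \<omega> in M. \<omega> \<in> Q \<longrightarrow> f \<omega> = c Q"
    by metis
  have "(\<Sum>g\<in>indicator ` \<A>. c (inv indicator g) * g \<omega>) = (\<Sum>Q\<in>\<A>. c Q * indicator Q \<omega>)" for \<omega>
    by (simp add: sum.reindex inj_on_subset[OF inj_indicator] inv_f_f[OF inj_indicator])
  moreover have "AE \<omega> in M. \<forall>Q\<in>\<A>. \<omega> \<in> Q \<longrightarrow> f \<omega> = c Q"
    using c by (intro AE_finite_allI[OF \<open>finite \<A>\<close>])
  then have "AE \<omega> in M. indicator Z \<omega> * f \<omega> = (\<Sum>Q\<in>\<A>. c Q * indicator Q \<omega>)"
    using AE_not_in[OF null]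
  proof eventually_elim
    case (elim \<omega>)
    show ?case
    proof (cases "\<exists>Q\<in>\<A>. \<omega> \<in> Q")
      case True
      then obtain Q where Q: "Q \<in> \<A>" "\<omega> \<in> Q" by blast
      have "\<omega> \<notin> Q'" if "Q' \<in> \<A>" "Q' \<noteq> Q" for Q'
        using \<open>disjoint \<A>\<close> Q that by (auto simp: pairwise_def disjnt_def)
      then have "(\<Sum>Q'\<in>\<A>. c Q' * indicator Q' \<omega>) = (\<Sum>Q'\<in>\<A>. if Q' = Q then c Q else 0)"
        using Q by (intro sum.cong) auto
      also have "\<dots> = f \<omega>" using Q elim \<open>finite \<A>\<close> by simp
      moreover have "\<omega> \<in> Z" using Q atoms by blast
      ultimately show ?thesis by simp
    next
      case False
      with elim show ?thesis by auto
    qed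
  qed
  ultimately show "\<exists>c. AE \<omega> in M. indicator Z \<omega> * f \<omega> = (\<Sum>g\<in>indicator ` \<A>. c g * g \<omega>)"
    by (intro exI[of _ "\<lambda>g. c (inv indicator g)"]) simp
qed

section \<open>Derivations between \<open>L\<^sup>\<infinity>\<close> and \<open>L\<^sup>1\<close>\<close>

definition gaussian_floor :: "complex \<Rightarrow> complex" where
  "gaussian_floor z = Complex (of_int \<lfloor>Re z\<rfloor>) (of_int \<lfloor>Im z\<rfloor>)"

lemma gaussian_floor_Ints: "Re (gaussian_floor z) \<in> \<int>" "Im (gaussian_floor z) \<in> \<int>"
  by (simp_all add: gaussian_floor_def)

lemma gaussian_floor_zero [simp]: "gaussian_floor 0 = 0"
  by (simp add: gaussian_floor_def complex_eq_iff)

lemma norm_minus_gaussian_floor_le: "cmod (z - gaussian_floor z) \<le> 2"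
proof -
  have "\<bar>x - of_int \<lfloor>x\<rfloor>\<bar> \<le> 1" for x :: real
    using of_int_floor_le[of x] real_of_int_floor_gt_diff_one[of x] by arith
  then have "\<bar>Re (z - gaussian_floor z)\<bar> \<le> 1" "\<bar>Im (z - gaussian_floor z)\<bar> \<le> 1"
    by (simp_all add: gaussian_floor_def)
  then show ?thesis using cmod_le[of "z - gaussian_floor z"] by linarith
qed

lemma finite_gaussian_floor_image_cball: "finite (gaussian_floor ` cball 0 r)"
proof (rule finite_subset)
  let ?N = "{\<lfloor>- r\<rfloor>..\<lfloor>r\<rfloor>}"
  show "finite ((\<lambda>(a, b). Complex (of_int a) (of_int b)) ` (?N \<times> ?N))" by simp
  show "gaussian_floor ` cball 0 r \<subseteq> (\<lambda>(a, b). Complex (of_int a) (of_int b)) ` (?N \<times> ?N)"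
  proof
    fix w assume "w \<in> gaussian_floor ` cball 0 r"
    then obtain z where z: "cmod z \<le> r" and w: "w = gaussian_floor z" by auto
    have "\<bar>Re z\<bar> \<le> r" "\<bar>Im z\<bar> \<le> r"
      using abs_Re_le_cmod[of z] abs_Im_le_cmod[of z] z by linarith+
    then have "\<lfloor>Re z\<rfloor> \<in> ?N" "\<lfloor>Im z\<rfloor> \<in> ?N" by (auto intro: floor_mono)
    then show "w \<in> (\<lambda>(a, b). Complex (of_int a) (of_int b)) ` (?N \<times> ?N)"
      unfolding w gaussian_floor_def by (intro image_eqI[of _ _ "(\<lfloor>Re z\<rfloor>, \<lfloor>Im z\<rfloor>)"]) auto
  qed
qed

locale Linf_L1_derivation = finite_measure \<mu> for \<mu> :: "'a measure" +
  fixes A :: "('a \<Rightarrow> complex) set" and \<delta> :: "('a \<Rightarrow> complex) \<Rightarrow> ('a \<Rightarrow> complex)"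
  assumes bounded_in: "bounded_measurable \<mu> f \<Longrightarrow> f \<in> A"
    and in_borel_measurable: "x \<in> A \<Longrightarrow> x \<in> borel_measurable \<mu>"
    and nn_integral_norm_finite: "x \<in> A \<Longrightarrow> (\<integral>\<^sup>+ \<omega>. ennreal (cmod (x \<omega>)) \<partial>\<mu>) < \<infinity>"
    and derivation: "additive_derivation \<mu> A \<delta>"
begin

lemma deriv_in: "x \<in> A \<Longrightarrow> \<delta> x \<in> A"
  using derivation unfolding additive_derivation_def by blast

lemma deriv_cong:
  "x \<in> A \<Longrightarrow> y \<in> A \<Longrightarrow> (AE \<omega> in \<mu>. x \<omega> = y \<omega>) \<Longrightarrow> AE \<omega> in \<mu>. \<delta> x \<omega> = \<delta> y \<omega>"
  using derivation unfolding additive_derivation_def by blast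

lemma deriv_add:
  "x \<in> A \<Longrightarrow> y \<in> A \<Longrightarrow> AE \<omega> in \<mu>. \<delta> (\<lambda>t. x t + y t) \<omega> = \<delta> x \<omega> + \<delta> y \<omega>"
  using derivation unfolding additive_derivation_def by blast

lemma deriv_mult:
  "x \<in> A \<Longrightarrow> y \<in> A \<Longrightarrow> AE \<omega> in \<mu>. \<delta> (\<lambda>t. x t * y t) \<omega> = \<delta> x \<omega> * y \<omega> + x \<omega> * \<delta> y \<omega>"
  using derivation unfolding additive_derivation_def by blast

lemma deriv_zero: "AE \<omega> in \<mu>. \<delta> (\<lambda>_. 0) \<omega> = 0"
proof -
  have "(\<lambda>_. 0) \<in> A" by (rule bounded_in[OF bounded_measurable_const])
  from deriv_add[OF this this] show ?thesis by eventually_elim simp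
qed

lemma deriv_uminus:
  assumes "bounded_measurable \<mu> f"
  shows "AE \<omega> in \<mu>. \<delta> (\<lambda>t. - f t) \<omega> = - \<delta> f \<omega>"
proof -
  have "bounded_measurable \<mu> (\<lambda>t. - f t)"
    using bounded_measurable_mult[OF bounded_measurable_const assms, of "-1"] by simp
  from deriv_add[OF bounded_in[OF assms] bounded_in[OF this]] deriv_zero
  show ?thesis by eventually_elim (simp add: add_eq_0_iff)
qed

lemma deriv_of_nat_mult:
  assumes "bounded_measurable \<mu> f"
  shows "AE \<omega> in \<mu>. \<delta> (\<lambda>t. of_nat k * f t) \<omega> = of_nat k * \<delta> f \<omega>"
proof (induction k)
  case 0
  then show ?case using deriv_zero by simp
next
  case (Suc k)
  have "bounded_measurable \<mu> (\<lambda>t. of_nat k * f t)"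
    by (rule bounded_measurable_mult[OF bounded_measurable_const assms])
  from deriv_add[OF bounded_in[OF assms] bounded_in[OF this]] Suc
  show ?case by eventually_elim (simp add: algebra_simps)
qed

lemma deriv_of_int_mult:
  assumes "bounded_measurable \<mu> f"
  shows "AE \<omega> in \<mu>. \<delta> (\<lambda>t. of_int k * f t) \<omega> = of_int k * \<delta> f \<omega>"
proof (cases "0 \<le> k")
  case True
  then show ?thesis using deriv_of_nat_mult[OF assms, of "nat k"] by simp
next
  case False
  have "bounded_measurable \<mu> (\<lambda>t. of_nat (nat (- k)) * f t)"
    by (rule bounded_measurable_mult[OF bounded_measurable_const assms])
  from deriv_uminus[OF this] deriv_of_nat_mult[OF assms, of "nat (- k)"]
  have "AE \<omega> in \<mu>. \<delta> (\<lambda>t. - (of_nat (nat (- k)) * f t)) \<omega> = - (of_nat (nat (- k)) * \<delta> f \<omega>)"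
    by eventually_elim simp
  moreover have k: "of_int k = - (of_nat (nat (- k)) :: complex)" using False by simp
  ultimately show ?thesis by (simp add: k)
qed

lemma deriv_indicator:
  assumes "R \<in> sets \<mu>"
  shows "AE \<omega> in \<mu>. \<delta> (\<lambda>t. indicator R t) \<omega> = 0"
proof -
  have R: "(\<lambda>t. indicator R t) \<in> A"
    using bounded_in[OF bounded_measurable_indicator[OF assms, of 1]] by simp
  have idem: "(\<lambda>t. indicator R t * indicator R t) = (\<lambda>t. indicator R t :: complex)"
    by (simp add: fun_eq_iff indicator_def)
  from deriv_mult[OF R R, unfolded idem] show ?thesis
    by eventually_elim (case_tac "\<omega> \<in> R"; simp)
qed

lemma deriv_indicator_mult:
  assumes "x \<in> A" and "R \<in> sets \<mu>"
  shows "AE \<omega> in \<mu>. \<delta> (\<lambda>t. indicator R t * x t) \<omega> = indicator R \<omega> * \<delta> x \<omega>"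
proof -
  have "(\<lambda>t. indicator R t) \<in> A"
    using bounded_in[OF bounded_measurable_indicator[OF assms(2), of 1]] by simp
  from deriv_mult[OF this assms(1)] deriv_indicator[OF assms(2)] show ?thesis
    by eventually_elim simp
qed

lemma deriv_imaginary_unit_indicator:
  assumes R: "R \<in> sets \<mu>"
  shows "AE \<omega> in \<mu>. \<delta> (\<lambda>t. \<i> * indicator R t) \<omega> = 0"
proof -
  have iR: "(\<lambda>t. \<i> * indicator R t) \<in> A" by (rule bounded_in[OF bounded_measurable_indicator[OF R]])
  have square: "(\<lambda>t. (\<i> * indicator R t) * (\<i> * indicator R t)) = (\<lambda>t. - indicator R t :: complex)"
    and absorb: "(\<lambda>t. indicator R t * (\<i> * indicator R t)) = (\<lambda>t. \<i> * indicator R t :: complex)"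
    by (auto simp: indicator_def)
  \<comment> \<open>On \<open>R\<close> differentiate \<open>(\<i> \<chi>\<^sub>R)\<^sup>2 = - \<chi>\<^sub>R\<close>; off \<open>R\<close> use \<open>\<chi>\<^sub>R \<cdot> \<i> \<chi>\<^sub>R = \<i> \<chi>\<^sub>R\<close>.\<close>
  from deriv_mult[OF iR iR, unfolded square] deriv_indicator_mult[OF iR R, unfolded absorb]
    deriv_uminus[OF bounded_measurable_indicator[OF R, of 1]] deriv_indicator[OF R]
  show ?thesis by eventually_elim (case_tac "\<omega> \<in> R"; simp)
qed

lemma deriv_sum:
  assumes "finite I" and "\<And>i. i \<in> I \<Longrightarrow> bounded_measurable \<mu> (f i)"
  shows "AE \<omega> in \<mu>. \<delta> (\<lambda>t. \<Sum>i\<in>I. f i t) \<omega> = (\<Sum>i\<in>I. \<delta> (f i) \<omega>)"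
  using assms
proof (induction I rule: finite_induct)
  case empty
  then show ?case using deriv_zero by simp
next
  case (insert i I)
  have "bounded_measurable \<mu> (\<lambda>t. \<Sum>j\<in>I. f j t)"
    using insert.prems by (intro bounded_measurable_sum[OF insert.hyps(1)]) auto
  from deriv_add[OF bounded_in[OF insert.prems[of i]] bounded_in[OF this]] insert.IH insert.prems
  have "AE \<omega> in \<mu>. \<delta> (\<lambda>t. f i t + (\<Sum>j\<in>I. f j t)) \<omega> = \<delta> (f i) \<omega> + (\<Sum>j\<in>I. \<delta> (f j) \<omega>)"
    by (auto elim: AE_mp)
  then show ?case using insert.hyps by simp
qed

lemma deriv_gaussian_indicator:
  assumes R: "R \<in> sets \<mu>" and c: "Re c \<in> \<int>" "Im c \<in> \<int>"
  shows "AE \<omega> in \<mu>. \<delta> (\<lambda>t. c * indicator R t) \<omega> = 0"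
proof -
  obtain a b where "Re c = of_int a" "Im c = of_int b" using c by (metis Ints_cases)
  then have "c = of_int a + of_int b * \<i>" by (simp add: complex_eq_iff)
  then have c_split: "(\<lambda>t. c * indicator R t) = (\<lambda>t. of_int a * indicator R t + of_int b * (\<i> * indicator R t))"
    by (simp add: algebra_simps)
  have one: "bounded_measurable \<mu> (\<lambda>t. indicator R t)"
    using bounded_measurable_indicator[OF R, of 1] by simp
  have i: "bounded_measurable \<mu> (\<lambda>t. \<i> * indicator R t)" by (rule bounded_measurable_indicator[OF R])
  from deriv_add[OF bounded_in bounded_in,
      OF bounded_measurable_mult[OF bounded_measurable_const[of \<mu> "of_int a"] one]
      bounded_measurable_mult[OF bounded_measurable_const[of \<mu> "of_int b"] i]]
    deriv_of_int_mult[OF one, of a] deriv_of_int_mult[OF i, of b]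
    deriv_indicator[OF R] deriv_imaginary_unit_indicator[OF R]
  show ?thesis unfolding c_split by eventually_elim simp
qed

lemma deriv_gaussian_simple:
  assumes g: "g \<in> borel_measurable \<mu>" and fin: "finite (range g)"
    and gauss: "\<And>t. Re (g t) \<in> \<int> \<and> Im (g t) \<in> \<int>"
  shows "AE \<omega> in \<mu>. \<delta> g \<omega> = 0"
proof -
  define S where "S v = g -` {v} \<inter> space \<mu>" for v
  have S: "S v \<in> sets \<mu>" for v unfolding S_def using borel_measurable_vimage[OF g] .
  have parts: "bounded_measurable \<mu> (\<lambda>t. v * indicator (S v) t)" for v
    by (rule bounded_measurable_indicator[OF S])
  have "bounded_measurable \<mu> g"
    by (rule bounded_measurableI[OF g, of "\<Sum>v\<in>range g. cmod v"])
       (auto intro!: member_le_sum fin)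
  moreover have "AE \<omega> in \<mu>. g \<omega> = (\<Sum>v\<in>range g. v * indicator (S v) \<omega>)"
  proof (rule AE_I2)
    fix \<omega> assume "\<omega> \<in> space \<mu>"
    then have "(\<Sum>v\<in>range g. v * indicator (S v) \<omega>) = (\<Sum>v\<in>range g. if g \<omega> = v then v else 0)"
      by (intro sum.cong) (auto simp: S_def indicator_def)
    also have "\<dots> = g \<omega>" using fin by (simp add: sum.delta')
    finally show "g \<omega> = (\<Sum>v\<in>range g. v * indicator (S v) \<omega>)" by simp
  qed
  ultimately have "AE \<omega> in \<mu>. \<delta> g \<omega> = \<delta> (\<lambda>t. \<Sum>v\<in>range g. v * indicator (S v) t) \<omega>"
    using parts by (intro deriv_cong bounded_in bounded_measurable_sum fin)
  moreover have "AE \<omega> in \<mu>. \<delta> (\<lambda>t. \<Sum>v\<in>range g. v * indicator (S v) t) \<omega>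
      = (\<Sum>v\<in>range g. \<delta> (\<lambda>t. v * indicator (S v) t) \<omega>)"
    using parts by (intro deriv_sum fin)
  moreover have "AE \<omega> in \<mu>. \<forall>v\<in>range g. \<delta> (\<lambda>t. v * indicator (S v) t) \<omega> = 0"
    using gauss by (intro AE_finite_allI fin) (auto intro!: deriv_gaussian_indicator S)
  ultimately show ?thesis by eventually_elim simp
qed

definition large_derivative_on :: "'a set \<Rightarrow> ('a \<Rightarrow> complex) \<Rightarrow> bool" where
  "large_derivative_on P u \<longleftrightarrow> u \<in> borel_measurable \<mu> \<and> (\<forall>\<omega>. cmod (u \<omega>) \<le> 2) \<and>
     (\<forall>\<omega>. \<omega> \<notin> P \<longrightarrow> u \<omega> = 0) \<and> 1 \<le> (\<integral>\<^sup>+ \<omega>. ennreal (cmod (\<delta> u \<omega>)) \<partial>\<mu>)"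

lemma large_derivative_on_if_deriv_nonzero:
  assumes w: "bounded_measurable \<mu> w" and w_P: "\<And>\<omega>. \<omega> \<notin> P \<Longrightarrow> w \<omega> = 0"
    and nonzero: "\<not> (AE \<omega> in \<mu>. \<delta> w \<omega> = 0)"
  shows "\<exists>u. large_derivative_on P u"
proof -
  obtain C where w_meas: "w \<in> borel_measurable \<mu>" and "0 \<le> C" and w_le: "\<And>\<omega>. cmod (w \<omega>) \<le> C"
    using bounded_measurableE[OF w] by metis
  have dw: "\<delta> w \<in> borel_measurable \<mu>" by (rule in_borel_measurable[OF deriv_in[OF bounded_in[OF w]]])
  define a where "a = (\<integral>\<^sup>+ \<omega>. ennreal (cmod (\<delta> w \<omega>)) \<partial>\<mu>)"
  have "a \<noteq> 0"
    using nonzero dw by (auto simp: a_def nn_integral_0_iff_AE)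
  moreover have "a < \<infinity>"
    unfolding a_def by (rule nn_integral_norm_finite[OF deriv_in[OF bounded_in[OF w]]])
  ultimately obtain r where a: "a = ennreal r" and "0 < r"
    by (cases a) (auto simp: less_le)
  obtain k :: nat where "1 / r \<le> real k" using real_arch_simple by blast
  then have "1 \<le> real k * r" using \<open>0 < r\<close> by (simp add: field_simps)
  then have "ennreal 1 \<le> ennreal (real k * r)" by (rule ennreal_leI)
  then have "1 \<le> ennreal (real k) * a" using \<open>0 < r\<close> by (simp add: a ennreal_mult)
  \<comment> \<open>Subtracting the Gaussian-integer part of \<open>k w\<close> keeps the function bounded by 2 while
    \<open>\<delta>\<close> still multiplies the derivative by \<open>k\<close>, since \<open>\<delta>\<close> kills simple functions with values in \<open>\<int>[\<i>]\<close>.\<close>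
  define g where "g t = gaussian_floor (of_nat k * w t)" for t
  define u where "u t = of_nat k * w t - g t" for t
  have g_meas: "g \<in> borel_measurable \<mu>"
    unfolding g_def gaussian_floor_def using w_meas by measurable
  have "range g \<subseteq> gaussian_floor ` cball 0 (real k * C)"
    using w_le by (auto simp: g_def norm_mult intro!: imageI mult_left_mono)
  then have "finite (range g)" by (rule finite_subset[OF _ finite_gaussian_floor_image_cball])
  then have dg: "AE \<omega> in \<mu>. \<delta> g \<omega> = 0"
    using g_meas by (intro deriv_gaussian_simple) (auto simp: g_def gaussian_floor_Ints)
  have u_le: "cmod (u \<omega>) \<le> 2" for \<omega>
    unfolding u_def g_def by (rule norm_minus_gaussian_floor_le)
  have u_meas: "u \<in> borel_measurable \<mu>" unfolding u_def using w_meas g_meas by measurable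
  have kw: "bounded_measurable \<mu> (\<lambda>t. of_nat k * w t)"
    by (rule bounded_measurable_mult[OF bounded_measurable_const w])
  have u: "bounded_measurable \<mu> u" by (rule bounded_measurableI[OF u_meas u_le])
  have "bounded_measurable \<mu> (\<lambda>t. of_nat k * w t + (- 1) * u t)"
    by (intro bounded_measurable_add bounded_measurable_mult bounded_measurable_const kw u)
  then have g: "bounded_measurable \<mu> g" by (simp add: u_def)
  have "(\<lambda>t. of_nat k * w t) = (\<lambda>t. g t + u t)" by (simp add: u_def)
  with deriv_of_nat_mult[OF w, of k] have "AE \<omega> in \<mu>. \<delta> (\<lambda>t. g t + u t) \<omega> = of_nat k * \<delta> w \<omega>"
    by simp
  with deriv_add[OF bounded_in[OF g] bounded_in[OF u]] dg
  have du: "AE \<omega> in \<mu>. \<delta> u \<omega> = of_nat k * \<delta> w \<omega>" by eventually_elim simp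
  have "(\<integral>\<^sup>+ \<omega>. ennreal (cmod (\<delta> u \<omega>)) \<partial>\<mu>) = (\<integral>\<^sup>+ \<omega>. ennreal (real k) * ennreal (cmod (\<delta> w \<omega>)) \<partial>\<mu>)"
    using du by (intro nn_integral_cong_AE) (auto elim!: eventually_mono simp: norm_mult ennreal_mult)
  also have "\<dots> = ennreal (real k) * a" unfolding a_def using dw by (simp add: nn_integral_cmult)
  finally have "1 \<le> (\<integral>\<^sup>+ \<omega>. ennreal (cmod (\<delta> u \<omega>)) \<partial>\<mu>)"
    using \<open>1 \<le> ennreal (real k) * a\<close> by simp
  moreover have "u \<omega> = 0" if "\<omega> \<notin> P" for \<omega> using w_P[OF that] by (simp add: u_def g_def)
  ultimately show ?thesis using u_meas u_le unfolding large_derivative_on_def by blast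
qed

lemma large_derivative_on_subset_support:
  assumes Z_fix: "proj_fixes \<mu> A \<delta> Z"
    and Z_least: "\<And>W. proj_fixes \<mu> A \<delta> W \<Longrightarrow> AE \<omega> in \<mu>. \<omega> \<in> Z \<longrightarrow> \<omega> \<in> W"
    and P: "P \<in> sets \<mu>" "P \<subseteq> Z" "emeasure \<mu> P \<noteq> 0"
  shows "\<exists>u. large_derivative_on P u"
proof -
  have "\<not> proj_fixes \<mu> A \<delta> (Z - P)"
  proof
    assume "proj_fixes \<mu> A \<delta> (Z - P)"
    from Z_least[OF this] have "AE \<omega> in \<mu>. \<omega> \<notin> P" by eventually_elim (use P in auto)
    with P(3) show False by (auto simp: AE_iff_null_sets[OF P(1), symmetric])
  qed
  moreover have "Z - P \<in> sets \<mu>" using Z_fix P(1) unfolding proj_fixes_def by auto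
  ultimately obtain x where x: "x \<in> A"
    and not_fixed: "\<not> (AE \<omega> in \<mu>. indicator (Z - P) \<omega> * \<delta> x \<omega> = \<delta> x \<omega>)"
    unfolding proj_fixes_def by blast
  have fixed: "AE \<omega> in \<mu>. indicator Z \<omega> * \<delta> x \<omega> = \<delta> x \<omega>"
    using Z_fix x unfolding proj_fixes_def by blast
  have "\<not> (AE \<omega> in \<mu>. \<omega> \<in> P \<longrightarrow> \<delta> x \<omega> = 0)"
  proof
    assume "AE \<omega> in \<mu>. \<omega> \<in> P \<longrightarrow> \<delta> x \<omega> = 0"
    with fixed have "AE \<omega> in \<mu>. indicator (Z - P) \<omega> * \<delta> x \<omega> = \<delta> x \<omega>"
      by eventually_elim (auto simp: indicator_def split: if_splits)
    with not_fixed show False by simp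
  qed
  then have "\<exists>N::nat. \<not> (AE \<omega> in \<mu>. cmod (x \<omega>) \<le> real N \<longrightarrow> \<omega> \<in> P \<longrightarrow> \<delta> x \<omega> = 0)"
    using AE_by_norm_truncation[where M=\<mu> and x=x and Q="\<lambda>\<omega>. \<omega> \<in> P \<longrightarrow> \<delta> x \<omega> = 0"]
    by (rule contrapos_np) simp
  then obtain N :: nat
    where N: "\<not> (AE \<omega> in \<mu>. cmod (x \<omega>) \<le> real N \<longrightarrow> \<omega> \<in> P \<longrightarrow> \<delta> x \<omega> = 0)" ..
  have x_meas: "x \<in> borel_measurable \<mu>" by (rule in_borel_measurable[OF x])
  define R where "R = P \<inter> {\<omega> \<in> space \<mu>. cmod (x \<omega>) \<le> real N}"
  have R: "R \<in> sets \<mu>" unfolding R_def using P(1) x_meas by measurable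
  have "(\<lambda>t. indicator R t * x t) \<in> borel_measurable \<mu>" using R x_meas by measurable
  then have w: "bounded_measurable \<mu> (\<lambda>t. indicator R t * x t)"
    by (rule bounded_measurableI[of _ _ "real N"]) (auto simp: R_def indicator_def)
  have nonzero: "\<not> (AE \<omega> in \<mu>. \<delta> (\<lambda>t. indicator R t * x t) \<omega> = 0)"
  proof
    assume "AE \<omega> in \<mu>. \<delta> (\<lambda>t. indicator R t * x t) \<omega> = 0"
    with deriv_indicator_mult[OF x R] AE_space
    have "AE \<omega> in \<mu>. cmod (x \<omega>) \<le> real N \<longrightarrow> \<omega> \<in> P \<longrightarrow> \<delta> x \<omega> = 0"
      by eventually_elim (auto simp: R_def)
    with N show False by simp
  qed
  show ?thesis
    by (rule large_derivative_on_if_deriv_nonzero[OF w _ nonzero]) (simp add: R_def)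
qed

lemma support_has_no_disjoint_family:
  assumes Z_fix: "proj_fixes \<mu> A \<delta> Z"
    and Z_least: "\<And>W. proj_fixes \<mu> A \<delta> W \<Longrightarrow> AE \<omega> in \<mu>. \<omega> \<in> Z \<longrightarrow> \<omega> \<in> W"
    and P: "\<And>n::nat. P n \<in> sets \<mu>" "\<And>n. P n \<subseteq> Z" "\<And>n. emeasure \<mu> (P n) \<noteq> 0"
    and disj: "disjoint_family P"
  shows False
proof -
  obtain u where u: "\<And>n. large_derivative_on (P n) (u n)"
    using large_derivative_on_subset_support[OF Z_fix Z_least P(1,2,3)] by metis
  \<comment> \<open>The pieces have disjoint supports, so they glue to one bounded function \<open>y\<close>; by locality
    of \<open>\<delta>\<close>, \<open>|\<delta> y|\<close> has integral at least 1 over each \<open>P n\<close>, contradicting \<open>\<delta> y \<in> L\<^sup>1\<close>.\<close>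
  define y where "y \<omega> = (\<Sum>n. u n \<omega>)" for \<omega>
  have u_off: "u n \<omega> = 0" if "\<omega> \<notin> P n" for n \<omega>
    using u[of n] that unfolding large_derivative_on_def by blast
  have y_on: "y \<omega> = u j \<omega>" if "\<omega> \<in> P j" for \<omega> j
  proof -
    have "u n \<omega> = 0" if "n \<notin> {j}" for n
      using u_off \<open>\<omega> \<in> P j\<close> that disj unfolding disjoint_family_on_def by blast
    then show ?thesis unfolding y_def by (subst suminf_finite[of "{j}"]) auto
  qed
  have y_off: "y \<omega> = 0" if "\<forall>j. \<omega> \<notin> P j" for \<omega>
    using u_off that by (simp add: y_def)
  have "bounded_measurable \<mu> y"
  proof (rule bounded_measurableI)
    show "y \<in> borel_measurable \<mu>"
      unfolding y_def using u by (intro borel_measurable_suminf) (simp add: large_derivative_on_def)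
    show "cmod (y \<omega>) \<le> 2" for \<omega>
      using u y_on y_off unfolding large_derivative_on_def by (cases "\<exists>j. \<omega> \<in> P j") auto
  qed
  then have y: "y \<in> A" by (rule bounded_in)
  have dy: "\<delta> y \<in> borel_measurable \<mu>" by (rule in_borel_measurable[OF deriv_in[OF y]])
  have "1 \<le> (\<integral>\<^sup>+ \<omega>\<in>P j. ennreal (cmod (\<delta> y \<omega>)) \<partial>\<mu>)" for j
  proof -
    have "(\<lambda>t. indicator (P j) t * y t) = u j"
      by (auto simp: fun_eq_iff indicator_def y_on u_off)
    with deriv_indicator_mult[OF y P(1)[of j]]
    have "AE \<omega> in \<mu>. \<delta> (u j) \<omega> = indicator (P j) \<omega> * \<delta> y \<omega>" by simp
    then have "(\<integral>\<^sup>+ \<omega>. ennreal (cmod (\<delta> (u j) \<omega>)) \<partial>\<mu>) = (\<integral>\<^sup>+ \<omega>\<in>P j. ennreal (cmod (\<delta> y \<omega>)) \<partial>\<mu>)"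
      by (intro nn_integral_cong_AE) (auto elim!: eventually_mono simp: indicator_def norm_mult)
    with u[of j] show ?thesis unfolding large_derivative_on_def by simp
  qed
  then have "(\<integral>\<^sup>+ \<omega>. ennreal (cmod (\<delta> y \<omega>)) \<partial>\<mu>) = \<infinity>"
    using dy P(1) disj by (intro nn_integral_eq_top_if_disjoint_family) auto
  with nn_integral_norm_finite[OF deriv_in[OF y]] show False by simp
qed

end

lemma Linf_L1_derivation_orlicz_inter:
  assumes "finite_measure \<mu>" and "\<Lambda> \<noteq> {}" and "quadratic_family \<Lambda>"
    and "additive_derivation \<mu> (orlicz_inter \<mu> \<Lambda>) \<delta>"
  shows "Linf_L1_derivation \<mu> (orlicz_inter \<mu> \<Lambda>) \<delta>"
proof -
  have young: "\<phi> \<in> \<Lambda> \<Longrightarrow> young_function \<phi>" for \<phi>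
    using assms(3) unfolding quadratic_family_def by blast
  obtain \<phi> where "\<phi> \<in> \<Lambda>" using assms(2) by blast
  show ?thesis
  proof (intro Linf_L1_derivation.intro Linf_L1_derivation_axioms.intro)
    show "f \<in> orlicz_inter \<mu> \<Lambda>" if "bounded_measurable \<mu> f" for f
      using that bounded_in_orlicz[OF assms(1) young]
      unfolding orlicz_inter_def meas_ops_def bounded_measurable_def by blast
    show "x \<in> borel_measurable \<mu>" if "x \<in> orlicz_inter \<mu> \<Lambda>" for x
      using that unfolding orlicz_inter_def meas_ops_def by blast
    show "(\<integral>\<^sup>+ \<omega>. ennreal (cmod (x \<omega>)) \<partial>\<mu>) < \<infinity>" if "x \<in> orlicz_inter \<mu> \<Lambda>" for x
      using that \<open>\<phi> \<in> \<Lambda>\<close> orlicz_nn_integral_norm_finite[OF assms(1) young]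
      unfolding orlicz_inter_def by blast
  qed (fact assms)+
qed

theorem lemma3p3:
  fixes \<mu> :: "'a measure" and \<Lambda> :: "(real \<Rightarrow> real) set"
    and \<delta> :: "('a \<Rightarrow> complex) \<Rightarrow> ('a \<Rightarrow> complex)"
  assumes "finite_measure \<mu>"
    and "\<Lambda> \<noteq> {}"
    and "quadratic_family \<Lambda>"
    and "additive_derivation \<mu> (orlicz_inter \<mu> \<Lambda>) \<delta>"
  shows "\<exists>Z. support_proj \<mu> (orlicz_inter \<mu> \<Lambda>) \<delta> Z \<and> fin_dim_corner \<mu> Z"
proof -
  interpret Linf_L1_derivation \<mu> "orlicz_inter \<mu> \<Lambda>" \<delta>
    using assms by (rule Linf_L1_derivation_orlicz_inter)
  obtain Z where Z_fix: "proj_fixes \<mu> (orlicz_inter \<mu> \<Lambda>) \<delta> Z"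
    and Z_least: "\<And>W. proj_fixes \<mu> (orlicz_inter \<mu> \<Lambda>) \<delta> W \<Longrightarrow> AE \<omega> in \<mu>. \<omega> \<in> Z \<longrightarrow> \<omega> \<in> W"
    using exists_least_proj_fixes by blast
  have "Z \<in> sets \<mu>" using Z_fix unfolding proj_fixes_def by blast
  have "no_infinite_disjoint_family \<mu> Z"
    unfolding no_infinite_disjoint_family_def
    using support_has_no_disjoint_family[OF Z_fix Z_least] by blast
  then obtain \<A> where "finite \<A>" "disjoint \<A>" "\<forall>Q\<in>\<A>. atom \<mu> Q \<and> Q \<subseteq> Z" "Z - \<Union>\<A> \<in> null_sets \<mu>"
    using atomic_decomposition[OF _ \<open>Z \<in> sets \<mu>\<close>] by blast
  then have "fin_dim_corner \<mu> Z" by (intro fin_dim_corner_if_atomic) auto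
  moreover have "support_proj \<mu> (orlicz_inter \<mu> \<Lambda>) \<delta> Z"
    by (rule support_proj_if_least[OF Z_fix Z_least])
  ultimately show ?thesis by blast
qed

end
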